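(* Let $T$ be a tree with at least one edge, let $p(T)$ be the number of pendant vertices of $T$, and let $\widetilde{T}$ be the subtree obtained from $T$ by removing all pendant vertices of $T$. Then (i) $\alpha(T)<\alpha(\widetilde{T})+p(T)$; (ii) if $D\subseteq V_T$ satisfies $\alpha(T)=\alpha(T-D)+|D|$, then there is a pendant vertex $v$ of $T$ with $v\notin D$.
   Context: $\alpha(\cdot)$ denotes the independence number. A pendant vertex is a vertex of degree one. $T-D$ denotes the graph obtained from $T$ by deleting the vertices of $D$ and their incident edges. *)

theory Defs
  imports Main
begin

definition sgraph :: "'a set \<Rightarrow> 'a set set \<Rightarrow> bool" where
  "sgraph V E \<longleftrightarrow> finite V \<and> (\<forall>e\<in>E. e \<subseteq> V \<and> card e = 2)"

definition degree :: "'a set \<Rightarrow> 'a set set \<Rightarrow> 'a \<Rightarrow> nat" where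
  "degree V E v = card {u\<in>V. {u, v} \<in> E}"

definition pendant :: "'a set \<Rightarrow> 'a set set \<Rightarrow> 'a \<Rightarrow> bool" where
  "pendant V E v \<longleftrightarrow> v \<in> V \<and> degree V E v = 1"

definition pendants :: "'a set \<Rightarrow> 'a set set \<Rightarrow> 'a set" where
  "pendants V E = {v. pendant V E v}"

text \<open>Edges of the subgraph induced by a vertex set S (i.e. the graph minus the other vertices).\<close>
definition induced_edges :: "'a set set \<Rightarrow> 'a set \<Rightarrow> 'a set set" where
  "induced_edges E S = {e\<in>E. e \<subseteq> S}"

definition connected_graph :: "'a set \<Rightarrow> 'a set set \<Rightarrow> bool" where
  "connected_graph V E \<longleftrightarrow>
     (\<forall>u\<in>V. \<forall>v\<in>V. (u, v) \<in> {(x, y). {x, y} \<in> E}\<^sup>*)"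

definition has_cycle :: "'a set \<Rightarrow> 'a set set \<Rightarrow> bool" where
  "has_cycle V E \<longleftrightarrow> (\<exists>cs. length cs \<ge> 3 \<and> distinct cs \<and> set cs \<subseteq> V \<and>
      (\<forall>i<length cs. {cs ! i, cs ! ((i + 1) mod length cs)} \<in> E))"

definition is_tree :: "'a set \<Rightarrow> 'a set set \<Rightarrow> bool" where
  "is_tree V E \<longleftrightarrow> sgraph V E \<and> V \<noteq> {} \<and> connected_graph V E \<and> \<not> has_cycle V E"

definition independent :: "'a set set \<Rightarrow> 'a set \<Rightarrow> bool" where
  "independent E S \<longleftrightarrow> (\<forall>u\<in>S. \<forall>v\<in>S. {u, v} \<notin> E)"

definition indep_num :: "'a set \<Rightarrow> 'a set set \<Rightarrow> nat" where
  "indep_num V E = Max {card S | S. S \<subseteq> V \<and> independent E S}"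

end

theory Submission
  imports Defs
begin

text \<open>
  Let \<open>T\<close> have \<open>n \<ge> 2\<close> vertices, hence \<open>n - 1\<close> edges, and let \<open>S\<close> be a maximum
  independent set. The edges at the vertices of \<open>S\<close> are pairwise distinct, every vertex has
  degree at least 1 and every non-pendant vertex degree at least 2, so
  \<open>2 \<alpha>(T) - |S \<inter> P| \<le> n - 1\<close>, where \<open>P\<close> is the set of pendant vertices.
  If \<open>P \<subseteq> D\<close>, then \<open>|S \<inter> P| \<le> |D|\<close>, while the forest \<open>T - D\<close> is bipartite, so
  \<open>2 \<alpha>(T - D) \<ge> n - |D|\<close>. Together, \<open>\<alpha>(T) < \<alpha>(T - D) + |D|\<close>; taking \<open>D = P\<close>
  gives (i), and (ii) is its contrapositive.
\<close>

definition neighbours :: "'a set \<Rightarrow> 'a set set \<Rightarrow> 'a \<Rightarrow> 'a set" where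
  "neighbours V E v = {u\<in>V. {u, v} \<in> E}"

lemma degree_eq_card_neighbours: "degree V E v = card (neighbours V E v)"
  by (simp add: degree_def neighbours_def)

lemma sgraph_edgeE:
  assumes "sgraph V E" "e \<in> E"
  obtains a b where "a \<noteq> b" "e = {a, b}" "a \<in> V" "b \<in> V"
proof -
  have "e \<subseteq> V" "card e = 2" using assms by (auto simp: sgraph_def)
  then show ?thesis using that by (auto simp: card_2_iff)
qed

lemma sgraph_no_loop: "sgraph V E \<Longrightarrow> {a, a} \<notin> E"
  by (auto simp: sgraph_def)

lemma sgraph_edge_vertices: "sgraph V E \<Longrightarrow> {a, b} \<in> E \<Longrightarrow> a \<in> V \<and> b \<in> V"
  by (auto simp: sgraph_def)

lemma sgraph_finite_edges: "sgraph V E \<Longrightarrow> finite E"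
  by (rule finite_subset[of E "Pow V"]) (auto simp: sgraph_def)

lemma sgraph_finite_neighbours: "sgraph V E \<Longrightarrow> finite (neighbours V E v)"
  by (simp add: sgraph_def neighbours_def)

lemma sgraph_card_ge_2:
  assumes "sgraph V E" "E \<noteq> {}"
  shows "2 \<le> card V"
proof -
  obtain e where "e \<in> E" using assms(2) by blast
  then obtain a b where "a \<noteq> b" "a \<in> V" "b \<in> V" using sgraph_edgeE[OF assms(1)] by metis
  moreover have "finite V" using assms(1) by (simp add: sgraph_def)
  ultimately show ?thesis using card_le_Suc0_iff_eq by (metis not_less_eq_eq numeral_2_eq_2)
qed

lemma connected_neighbours_nonempty:
  assumes "sgraph V E" "connected_graph V E" "s \<in> V" "t \<in> V" "s \<noteq> t"
  shows "neighbours V E s \<noteq> {}"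
proof -
  have "(s, t) \<in> {(x, y). {x, y} \<in> E}\<^sup>*" using assms by (auto simp: connected_graph_def)
  then obtain u where "{s, u} \<in> E"
    using assms(5) by (auto elim: converse_rtranclE)
  then have "u \<in> neighbours V E s"
    using sgraph_edge_vertices[OF assms(1)] by (auto simp: neighbours_def insert_commute)
  then show ?thesis by blast
qed

lemma connected_degree_pos:
  assumes "sgraph V E" "connected_graph V E" "2 \<le> card V" "s \<in> V"
  shows "1 \<le> degree V E s"
proof -
  have "finite V" using assms(1) by (simp add: sgraph_def)
  then obtain t where "t \<in> V" "t \<noteq> s"
    using assms(3,4) card_le_Suc0_iff_eq by (metis not_less_eq_eq numeral_2_eq_2)
  then have "neighbours V E s \<noteq> {}" using connected_neighbours_nonempty assms by metis
  then show ?thesis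
    using sgraph_finite_neighbours[OF assms(1)]
    by (simp add: degree_eq_card_neighbours Suc_le_eq card_gt_0_iff)
qed

lemma connected_without_edges: "connected_graph V {} \<Longrightarrow> card V \<le> 1"
  by (cases "finite V") (auto simp: connected_graph_def card_le_Suc0_iff_eq)

definition is_path :: "'a set \<Rightarrow> 'a set set \<Rightarrow> 'a list \<Rightarrow> bool" where
  "is_path V E cs \<longleftrightarrow> distinct cs \<and> set cs \<subseteq> V \<and>
     (\<forall>i. Suc i < length cs \<longrightarrow> {cs ! i, cs ! Suc i} \<in> E)"

lemma is_path_length_le: "finite V \<Longrightarrow> is_path V E cs \<Longrightarrow> length cs \<le> card V"
  unfolding is_path_def by (metis card_mono distinct_card)

lemma is_path_Cons:
  assumes "is_path V E cs" "cs \<noteq> []" "y \<in> V" "y \<notin> set cs" "{y, hd cs} \<in> E"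
  shows "is_path V E (y # cs)"
  unfolding is_path_def
proof (intro conjI allI impI)
  show "distinct (y # cs)" "set (y # cs) \<subseteq> V" using assms by (auto simp: is_path_def)
  fix k assume k: "Suc k < length (y # cs)"
  show "{(y # cs) ! k, (y # cs) ! Suc k} \<in> E"
  proof (cases k)
    case 0
    then show ?thesis using assms(2,5) by (simp add: hd_conv_nth)
  next
    case (Suc m)
    then have "Suc m < length cs" using k by simp
    then show ?thesis using \<open>k = Suc m\<close> assms(1) unfolding is_path_def by simp
  qed
qed

lemma is_path_closing_edge_cycle:
  assumes "is_path V E cs" "2 \<le> i" "i < length cs" "{cs ! i, cs ! 0} \<in> E"
  shows "has_cycle V E"
  unfolding has_cycle_def
proof (intro exI conjI allI impI)
  let ?cy = "take (Suc i) cs"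
  show "3 \<le> length ?cy" "distinct ?cy" "set ?cy \<subseteq> V"
    using assms set_take_subset[of "Suc i" cs] by (auto simp: is_path_def)
  fix j assume j: "j < length ?cy"
  show "{?cy ! j, ?cy ! ((j + 1) mod length ?cy)} \<in> E"
  proof (cases "j < i")
    case True
    then show ?thesis using assms(1,3) by (simp add: is_path_def)
  next
    case False
    then have "j = i" using j by simp
    then show ?thesis using assms(3,4) by simp
  qed
qed

text \<open>The first vertex of a longest path is a leaf: any further neighbour would either extend
  the path or close a cycle.\<close>

lemma acyclic_leaf_exists:
  assumes sg: "sgraph V E" and acyclic: "\<not> has_cycle V E" and "E \<noteq> {}"
  obtains l x where "l \<in> V" "neighbours V E l = {x}"
proof -
  have fin: "finite V" using sg by (simp add: sgraph_def)
  obtain a b where ab: "a \<noteq> b" "{a, b} \<in> E" "a \<in> V" "b \<in> V"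
    using \<open>E \<noteq> {}\<close> sgraph_edgeE[OF sg] by (metis ex_in_conv)
  let ?long = "\<lambda>cs. is_path V E cs \<and> 2 \<le> length cs"
  have "?long [a, b]" using ab by (auto simp: is_path_def less_Suc_eq)
  then obtain cs where cs: "?long cs" and longest: "\<And>ys. ?long ys \<Longrightarrow> length ys \<le> length cs"
    using ex_has_greatest_nat[of ?long "[a, b]" length "card V + 1"] is_path_length_le[OF fin]
    by (metis less_Suc_eq_le Suc_eq_plus1)
  have path: "is_path V E cs" and len: "2 \<le> length cs" using cs by auto
  have nonempty: "cs \<noteq> []" using len by auto
  have "cs ! 0 \<in> set cs" using nonempty by simp
  then have l_in: "cs ! 0 \<in> V" using path by (auto simp: is_path_def)
  have e01: "{cs ! 0, cs ! 1} \<in> E" using path len by (auto simp: is_path_def)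
  have "neighbours V E (cs ! 0) \<subseteq> {cs ! 1}"
  proof
    fix y assume "y \<in> neighbours V E (cs ! 0)"
    then have yV: "y \<in> V" and ey: "{y, cs ! 0} \<in> E" by (auto simp: neighbours_def)
    show "y \<in> {cs ! 1}"
    proof (cases "y \<in> set cs")
      case True
      then obtain i where i: "i < length cs" "cs ! i = y" by (auto simp: in_set_conv_nth)
      have "i \<noteq> 0" using i(2) ey sgraph_no_loop[OF sg] by metis
      moreover have "\<not> 2 \<le> i"
        using is_path_closing_edge_cycle[OF path _ i(1)] i ey acyclic by auto
      ultimately have "i = 1" by linarith
      then show ?thesis using i by simp
    next
      case False
      then have "?long (y # cs)"
        using is_path_Cons[OF path nonempty yV False] ey len hd_conv_nth[OF nonempty] by simp
      then show ?thesis using longest by fastforce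
    qed
  qed
  moreover have "cs ! 1 \<in> neighbours V E (cs ! 0)"
    using e01 sgraph_edge_vertices[OF sg e01] by (auto simp: neighbours_def insert_commute)
  ultimately show ?thesis using that l_in by blast
qed

lemma leaf_edge:
  assumes "sgraph V E" "neighbours V E l = {x}"
  shows "{x, l} \<in> E" "x \<in> V" "x \<noteq> l"
proof -
  have "x \<in> neighbours V E l" using assms(2) by simp
  then show "{x, l} \<in> E" "x \<in> V" by (auto simp: neighbours_def)
  then show "x \<noteq> l" using sgraph_no_loop[OF assms(1)] by auto
qed

lemma leaf_neighbour:
  assumes "sgraph V E" "neighbours V E l = {x}" "{w, l} \<in> E"
  shows "w = x"
  using assms sgraph_edge_vertices[OF assms(1,3)] by (auto simp: neighbours_def)

lemma edges_delete_leaf: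
  assumes sg: "sgraph V E" and leaf: "neighbours V E l = {x}"
  shows "E = insert {x, l} {e\<in>E. l \<notin> e}"
proof -
  have "e = {x, l}" if "e \<in> E" "l \<in> e" for e
  proof -
    obtain a b where ab: "e = {a, b}" "a \<noteq> b" using sgraph_edgeE[OF sg \<open>e \<in> E\<close>] by metis
    then consider "e = {b, l}" | "e = {a, l}" using \<open>l \<in> e\<close> by (auto simp: insert_commute)
    then show ?thesis using leaf_neighbour[OF sg leaf] \<open>e \<in> E\<close> by cases auto
  qed
  then show ?thesis using leaf_edge(1)[OF sg leaf] by blast
qed

text \<open>A walk in \<open>E\<close> between vertices other than \<open>l\<close> can only pass through the leaf \<open>l\<close>
  via \<open>x\<close>, so it stays a walk once \<open>l\<close> is deleted.\<close>

lemma connected_delete_leaf: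
  assumes sg: "sgraph V E" and conn: "connected_graph V E" and leaf: "neighbours V E l = {x}"
  shows "connected_graph (V - {l}) {e\<in>E. l \<notin> e}"
proof -
  let ?R = "{(a, b). {a, b} \<in> E}" and ?R' = "{(a, b). {a, b} \<in> {e\<in>E. l \<notin> e}}"
  have x_ne_l: "x \<noteq> l" using leaf_edge[OF sg leaf] by blast
  have walk: "(v \<noteq> l \<longrightarrow> (a, v) \<in> ?R'\<^sup>*) \<and> (v = l \<longrightarrow> (a, x) \<in> ?R'\<^sup>*)"
    if "(a, v) \<in> ?R\<^sup>*" "a \<noteq> l" for a v
    using that(1)
  proof (induction rule: rtrancl_induct)
    case base then show ?case using that(2) by simp
  next
    case (step v w)
    have vw: "{v, w} \<in> E" using step.hyps(2) by simp
    consider "w = l" | "v = l" | "v \<noteq> l" "w \<noteq> l" by blast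
    then show ?case
    proof cases
      case 1
      then show ?thesis using step.IH leaf_neighbour[OF sg leaf] vw x_ne_l by auto
    next
      case 2
      then show ?thesis using step.IH leaf_neighbour[OF sg leaf] vw by (auto simp: insert_commute)
    next
      case 3
      then have "(v, w) \<in> ?R'" using vw by simp
      then show ?thesis using step.IH 3 by (meson rtrancl.rtrancl_into_rtrancl)
    qed
  qed
  show ?thesis
    unfolding connected_graph_def
  proof (intro ballI)
    fix a b assume "a \<in> V - {l}" "b \<in> V - {l}"
    moreover have "(a, b) \<in> ?R\<^sup>*" using calculation conn by (auto simp: connected_graph_def)
    ultimately show "(a, b) \<in> ?R'\<^sup>*" using walk by blast
  qed
qed

lemma tree_delete_leaf:
  assumes tree: "is_tree V E" and leaf: "neighbours V E l = {x}"
  shows "is_tree (V - {l}) {e\<in>E. l \<notin> e}"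
proof -
  have sg: "sgraph V E" and conn: "connected_graph V E" and acyclic: "\<not> has_cycle V E"
    using tree by (auto simp: is_tree_def)
  have "x \<in> V - {l}" using leaf_edge[OF sg leaf] by blast
  moreover have "\<not> has_cycle (V - {l}) {e\<in>E. l \<notin> e}"
    using acyclic unfolding has_cycle_def by blast
  ultimately show ?thesis
    using sg connected_delete_leaf[OF sg conn leaf] by (auto simp: is_tree_def sgraph_def)
qed

lemma tree_card_edges: "is_tree V E \<Longrightarrow> card E + 1 = card V"
proof (induction "card V" arbitrary: V E)
  case 0
  then show ?case by (auto simp: is_tree_def sgraph_def)
next
  case (Suc n)
  have sg: "sgraph V E" and acyclic: "\<not> has_cycle V E" and conn: "connected_graph V E"
    using Suc.prems by (auto simp: is_tree_def)
  show ?case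
  proof (cases "E = {}")
    case True
    then show ?thesis using connected_without_edges conn Suc.hyps(2) by fastforce
  next
    case False
    then obtain l x where l: "l \<in> V" and leaf: "neighbours V E l = {x}"
      using acyclic_leaf_exists[OF sg acyclic] by blast
    let ?E' = "{e\<in>E. l \<notin> e}"
    have "n = card (V - {l})" using Suc.hyps(2) l by simp
    then have "card ?E' + 1 = card (V - {l})"
      using Suc.hyps(1) tree_delete_leaf[OF Suc.prems leaf] by blast
    moreover have "card E = card (insert {x, l} ?E')"
      using edges_delete_leaf[OF sg leaf] by (rule arg_cong)
    moreover have "card (insert {x, l} ?E') = card ?E' + 1"
      using sgraph_finite_edges[OF sg] by simp
    ultimately show ?thesis using l Suc.hyps(2) by simp
  qed
qed

lemma tree_two_colourable:
  "is_tree V E \<Longrightarrow> \<exists>c :: 'a \<Rightarrow> bool. \<forall>u v. {u, v} \<in> E \<longrightarrow> c u \<noteq> c v"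
proof (induction "card V" arbitrary: V E)
  case 0
  then show ?case by (auto simp: is_tree_def sgraph_def)
next
  case (Suc n)
  have sg: "sgraph V E" and acyclic: "\<not> has_cycle V E"
    using Suc.prems by (auto simp: is_tree_def)
  show ?case
  proof (cases "E = {}")
    case False
    then obtain l x where l: "l \<in> V" and leaf: "neighbours V E l = {x}"
      using acyclic_leaf_exists[OF sg acyclic] by blast
    let ?E' = "{e\<in>E. l \<notin> e}"
    have "n = card (V - {l})" using Suc.hyps(2) l by simp
    then obtain c :: "'a \<Rightarrow> bool" where c: "\<forall>u v. {u, v} \<in> ?E' \<longrightarrow> c u \<noteq> c v"
      using Suc.hyps(1)[OF _ tree_delete_leaf[OF Suc.prems leaf]] by blast
    have x_ne_l: "x \<noteq> l" using leaf_edge[OF sg leaf] by blast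
    have "(c(l := \<not> c x)) u \<noteq> (c(l := \<not> c x)) v" if "{u, v} \<in> E" for u v
    proof (cases "u = l \<or> v = l")
      case True
      then show ?thesis
        using that x_ne_l leaf_neighbour[OF sg leaf] by (auto simp: insert_commute)
    next
      case False
      then show ?thesis using that c by auto
    qed
    then show ?thesis by blast
  qed simp
qed

lemma finite_independent_cards: "finite V \<Longrightarrow> finite {card S | S. S \<subseteq> V \<and> independent E S}"
  by (rule finite_subset[of _ "card ` Pow V"]) auto

lemma card_le_indep_num:
  "finite V \<Longrightarrow> S \<subseteq> V \<Longrightarrow> independent E S \<Longrightarrow> card S \<le> indep_num V E"
  unfolding indep_num_def by (rule Max_ge) (auto dest: finite_independent_cards)

lemma indep_num_attained:
  assumes "finite V"
  obtains S where "S \<subseteq> V" "independent E S" "indep_num V E = card S"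
proof -
  have "{} \<subseteq> V" "independent E {}" by (auto simp: independent_def)
  then have "{card S | S. S \<subseteq> V \<and> independent E S} \<noteq> {}" by blast
  then have "indep_num V E \<in> {card S | S. S \<subseteq> V \<and> independent E S}"
    unfolding indep_num_def using Max_in finite_independent_cards[OF assms] by blast
  then show ?thesis using that by blast
qed

lemma two_colourable_card_le_indep_num:
  assumes fin: "finite W" and sub: "E' \<subseteq> E" and c: "\<forall>u v. {u, v} \<in> E \<longrightarrow> c u \<noteq> (c v :: bool)"
  shows "card W \<le> 2 * indep_num W E'"
proof -
  let ?A = "{w\<in>W. c w}" and ?B = "{w\<in>W. \<not> c w}"
  have "independent E' ?A" "independent E' ?B" using c sub by (auto simp: independent_def)
  then have "card ?A \<le> indep_num W E'" "card ?B \<le> indep_num W E'"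
    using card_le_indep_num[OF fin] by auto
  moreover have "card W = card ?A + card ?B"
    using fin by (subst card_Un_disjoint[symmetric]) (auto intro: arg_cong[where f = card])
  ultimately show ?thesis by simp
qed

text \<open>Distinct pairs \<open>(s, u)\<close> with \<open>s \<in> S\<close> and \<open>u\<close> a neighbour of \<open>s\<close> give distinct edges
  \<open>{u, s}\<close>, since \<open>{u, s} = {s', u'}\<close> with \<open>s \<noteq> s'\<close> would join two vertices of \<open>S\<close>.\<close>

lemma independent_sum_degree_le:
  assumes sg: "sgraph V E" and "S \<subseteq> V" and indep: "independent E S"
  shows "(\<Sum>s\<in>S. degree V E s) \<le> card E"
proof -
  have finS: "finite S" using assms(2) sg finite_subset by (auto simp: sgraph_def)
  let ?pairs = "Sigma S (neighbours V E)" and ?edge = "\<lambda>(s, u). {u, s}"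
  have "inj_on ?edge ?pairs"
  proof (rule inj_onI)
    fix p q assume "p \<in> ?pairs" "q \<in> ?pairs" "?edge p = ?edge q"
    then show "p = q"
      using indep by (auto simp: neighbours_def doubleton_eq_iff independent_def)
  qed
  moreover have "?edge ` ?pairs \<subseteq> E" by (auto simp: neighbours_def)
  ultimately have "card ?pairs \<le> card E"
    using card_inj_on_le sgraph_finite_edges[OF sg] by blast
  moreover have "card ?pairs = (\<Sum>s\<in>S. degree V E s)"
    using finS sgraph_finite_neighbours[OF sg] by (simp add: degree_eq_card_neighbours)
  ultimately show ?thesis by simp
qed

lemma tree_independent_card_bound:
  assumes tree: "is_tree V E" and "E \<noteq> {}" and "S \<subseteq> V" and indep: "independent E S"
  shows "2 * card S \<le> card V - 1 + card (S \<inter> pendants V E)"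
proof -
  have sg: "sgraph V E" and conn: "connected_graph V E" using tree by (auto simp: is_tree_def)
  have finS: "finite S" using assms(3) sg finite_subset by (auto simp: sgraph_def)
  let ?P = "pendants V E"
  have "(if s \<in> ?P then 1 else 2) \<le> degree V E s" if "s \<in> S" for s
  proof -
    have "s \<in> V" using that assms(3) by blast
    then have "1 \<le> degree V E s"
      using connected_degree_pos[OF sg conn sgraph_card_ge_2[OF sg \<open>E \<noteq> {}\<close>]] by blast
    moreover have "s \<notin> ?P \<Longrightarrow> degree V E s \<noteq> 1"
      using \<open>s \<in> V\<close> by (simp add: pendants_def pendant_def)
    ultimately show ?thesis by auto
  qed
  then have "(\<Sum>s\<in>S. if s \<in> ?P then 1 else 2) \<le> (\<Sum>s\<in>S. degree V E s)"
    by (rule sum_mono)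
  also have "\<dots> \<le> card E" using independent_sum_degree_le[OF sg assms(3) indep] .
  finally have "(\<Sum>s\<in>S. if s \<in> ?P then 1 else 2) \<le> card E" .
  moreover have "(\<Sum>s\<in>S. if s \<in> ?P then 1 else 2 :: nat) = card (S \<inter> ?P) + 2 * card (S - ?P)"
    using finS by (simp add: sum.If_cases Int_commute Diff_eq)
  moreover have "card S = card (S \<inter> ?P) + card (S - ?P)"
    using finS by (simp add: card_Int_Diff)
  ultimately show ?thesis using tree_card_edges[OF tree] by linarith
qed

lemma tree_indep_num_lt_delete:
  assumes tree: "is_tree V E" and "E \<noteq> {}" and "pendants V E \<subseteq> D" and "D \<subseteq> V"
  shows "indep_num V E < indep_num (V - D) (induced_edges E (V - D)) + card D"
proof -
  have sg: "sgraph V E" using tree by (simp add: is_tree_def)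
  have fin: "finite V" and finD: "finite D" using sg assms(4) finite_subset by (auto simp: sgraph_def)
  obtain S where S: "S \<subseteq> V" "independent E S" and alpha: "indep_num V E = card S"
    using indep_num_attained[OF fin] by blast
  obtain c where "\<forall>u v. {u, v} \<in> E \<longrightarrow> c u \<noteq> (c v :: bool)"
    using tree_two_colourable[OF tree] by blast
  moreover have "induced_edges E (V - D) \<subseteq> E" by (auto simp: induced_edges_def)
  ultimately have "card (V - D) \<le> 2 * indep_num (V - D) (induced_edges E (V - D))"
    using two_colourable_card_le_indep_num[of "V - D"] fin by blast
  moreover have "2 * card S \<le> card V - 1 + card (S \<inter> pendants V E)"
    using tree_independent_card_bound[OF tree \<open>E \<noteq> {}\<close> S] .
  moreover have "card (S \<inter> pendants V E) \<le> card D"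
    using assms(3) finD by (meson card_mono inf.coboundedI2)
  moreover have "card (V - D) = card V - card D" using card_Diff_subset[OF finD assms(4)] .
  moreover have "card D \<le> card V" using card_mono[OF fin assms(4)] .
  moreover have "2 \<le> card V" using sgraph_card_ge_2[OF sg \<open>E \<noteq> {}\<close>] .
  ultimately show ?thesis using alpha by linarith
qed

theorem corollary1p17:
  fixes V :: "'a set" and E :: "'a set set"
  assumes "is_tree V E" and "E \<noteq> {}"
  shows "indep_num V E
           < indep_num (V - pendants V E) (induced_edges E (V - pendants V E)) + card (pendants V E)
         \<and> (\<forall>D. D \<subseteq> V \<and> indep_num V E = indep_num (V - D) (induced_edges E (V - D)) + card D
               \<longrightarrow> (\<exists>v. pendant V E v \<and> v \<notin> D))"
proof (intro conjI allI impI)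
  have "pendants V E \<subseteq> V" by (auto simp: pendants_def pendant_def)
  then show "indep_num V E
      < indep_num (V - pendants V E) (induced_edges E (V - pendants V E)) + card (pendants V E)"
    using tree_indep_num_lt_delete[OF assms order_refl] by blast
next
  fix D
  assume D: "D \<subseteq> V \<and> indep_num V E = indep_num (V - D) (induced_edges E (V - D)) + card D"
  then have "\<not> pendants V E \<subseteq> D" using tree_indep_num_lt_delete[OF assms] by auto
  then show "\<exists>v. pendant V E v \<and> v \<notin> D" by (auto simp: pendants_def)
qed

end
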